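(* Let $G$ and $H$ be nontrivial finite groups with $\gcd(|G|,|H|)=1$. Then the cyclic graph $\Delta(G\times H)$ is connected and $\mathrm{diam}(\Delta(G\times H))\le 3$.
   Context: For a finite group $X$, the cyclic graph $\Delta(X)$ has vertex set $X^{\#}=X\setminus\{1\}$, and distinct vertices $x,y$ are adjacent if and only if the subgroup $\langle x,y\rangle$ is cyclic. The diameter is the maximum graph distance between two vertices. *)

theory Defs
  imports "HOL-Algebra.Algebra"
begin

definition cg_vertices :: "('a, 'b) monoid_scheme \<Rightarrow> 'a set" where
  "cg_vertices Gr = carrier Gr - {one Gr}"

definition cg_adj :: "('a, 'b) monoid_scheme \<Rightarrow> 'a \<Rightarrow> 'a \<Rightarrow> bool" where
  "cg_adj Gr x y \<longleftrightarrow> x \<in> cg_vertices Gr \<and> y \<in> cg_vertices Gr \<and> x \<noteq> y \<and>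
     cyclic_group (subgroup_generated Gr {x, y})"

definition cg_walk :: "('a, 'b) monoid_scheme \<Rightarrow> 'a \<Rightarrow> 'a \<Rightarrow> nat \<Rightarrow> bool" where
  "cg_walk Gr x y n \<longleftrightarrow> (\<exists>vs. length vs = Suc n \<and> set vs \<subseteq> cg_vertices Gr \<and>
     hd vs = x \<and> last vs = y \<and> (\<forall>i < n. cg_adj Gr (vs ! i) (vs ! Suc i)))"

definition cg_connected :: "('a, 'b) monoid_scheme \<Rightarrow> bool" where
  "cg_connected Gr \<longleftrightarrow> (\<forall>x \<in> cg_vertices Gr. \<forall>y \<in> cg_vertices Gr. \<exists>n. cg_walk Gr x y n)"

definition cg_dist :: "('a, 'b) monoid_scheme \<Rightarrow> 'a \<Rightarrow> 'a \<Rightarrow> nat" where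
  "cg_dist Gr x y = (LEAST n. cg_walk Gr x y n)"

definition cg_diam :: "('a, 'b) monoid_scheme \<Rightarrow> nat" where
  "cg_diam Gr = Max {cg_dist Gr x y | x y. x \<in> cg_vertices Gr \<and> y \<in> cg_vertices Gr}"

end

theory Submission
  imports Defs "HOL-Number_Theory.Cong"
begin

text \<open>As the orders of G and H are coprime, so are those of a in G and b in H, and
  suitable powers of (a, b) equal (a, 1) and (1, b). Hence any two of (a, 1), (1, b), (a, b)
  generate the same cyclic group as (a, b), so distinct nontrivial ones are adjacent. In
  particular every (a, 1) is adjacent to every (1, b), and a vertex (g, h) is equal or adjacent
  to (g, 1) and to (1, h) when these are vertices. Two vertices are therefore joined by a walk
  that crosses one such edge between the two axes, of length at most 3.\<close>

lemma (in group) pow_eq_if_cong_ord: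
  assumes "x \<in> carrier G" "[m = n] (mod ord x)"
  shows "x [^] m = x [^] n"
proof -
  have "int (ord x) dvd int m - int n"
    using assms(2) by (simp add: cong_int_iff[symmetric] cong_iff_dvd_diff)
  then show ?thesis
    using int_pow_eq[OF assms(1), of "int n" "int m"] by (simp add: int_pow_int)
qed

lemma (in group) pow_mult_eq_self_if_coprime_ord:
  assumes "x \<in> carrier G" "coprime n (ord x)"
  obtains u where "x [^] (n * u) = x"
proof -
  obtain u where "[n * u = 1] (mod ord x)"
    using cong_solve_coprime_nat[OF assms(2)] by auto
  then have "x [^] (n * u) = x [^] (1::nat)"
    by (rule pow_eq_if_cong_ord[OF assms(1)])
  then show ?thesis
    using that assms(1) by simp
qed

lemma (in group) nat_pow_in_generate:
  assumes "x \<in> carrier G"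
  shows "x [^] (n::nat) \<in> generate G {x}"
  using generate_pow[OF assms] by (auto simp flip: int_pow_int)

lemma (in group) cyclic_group_subgroup_generatedI:
  assumes "S \<subseteq> carrier G" "S \<subseteq> generate G {z}" "z \<in> generate G S"
  shows "cyclic_group (subgroup_generated G S)"
proof -
  have z: "z \<in> carrier G"
    using assms(1,3) generate_in_carrier by blast
  have "generate G S = generate G {z}"
  proof
    show "generate G S \<subseteq> generate G {z}"
      using generate_subgroup_incl[OF assms(2) generate_is_subgroup] z by blast
    show "generate G {z} \<subseteq> generate G S"
      using generate_subgroup_incl[OF _ generate_is_subgroup[OF assms(1)]] assms(3) by blast
  qed
  then have "subgroup_generated G S = subgroup_generated G {z}"
    using assms(1) z by (simp add: subgroup_generated_def Int_absorb1)
  then show ?thesis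
    using cyclic_group_generated by simp
qed

lemma nat_pow_DirProd [simp]:
  "(a, b) [^]\<^bsub>G \<times>\<times> H\<^esub> (n::nat) = (a [^]\<^bsub>G\<^esub> n, b [^]\<^bsub>H\<^esub> n)"
  by (induction n) auto

lemma cg_vertices_DirProd:
  "cg_vertices (G \<times>\<times> H) = carrier G \<times> carrier H - {(\<one>\<^bsub>G\<^esub>, \<one>\<^bsub>H\<^esub>)}"
  unfolding cg_vertices_def by simp

lemma cg_adj_commute: "cg_adj K x y \<longleftrightarrow> cg_adj K y x"
  unfolding cg_adj_def by (auto simp: insert_commute)

lemma eq_or_cg_adj_commute: "x = y \<or> cg_adj K x y \<longleftrightarrow> y = x \<or> cg_adj K y x"
  using cg_adj_commute[of K x y] by blast

lemma cg_walk_refl: "x \<in> cg_vertices K \<Longrightarrow> cg_walk K x x 0"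
  unfolding cg_walk_def by (auto intro!: exI[of _ "[x]"])

lemma cg_walk_Cons:
  assumes "cg_adj K x y" "cg_walk K y z n"
  shows "cg_walk K x z (Suc n)"
proof -
  obtain vs where vs: "length vs = Suc n" "set vs \<subseteq> cg_vertices K" "hd vs = y" "last vs = z"
    "\<forall>i<n. cg_adj K (vs ! i) (vs ! Suc i)"
    using assms(2) unfolding cg_walk_def by blast
  have "vs ! 0 = y"
    using vs(1,3) by (cases vs) auto
  moreover have "x \<in> cg_vertices K"
    using assms(1) unfolding cg_adj_def by blast
  ultimately show ?thesis
    unfolding cg_walk_def using assms(1) vs
    by (intro exI[of _ "x # vs"]) (auto simp: nth_Cons' less_Suc_eq_0_disj)
qed

lemma cg_walk_through_edge:
  assumes "x = p \<or> cg_adj K x p" "cg_adj K p q" "q = y \<or> cg_adj K q y"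
  shows "\<exists>n\<le>3. cg_walk K x y n"
proof -
  obtain m where m: "m \<le> 1" "cg_walk K q y m"
  proof (cases "q = y")
    case True
    have "q \<in> cg_vertices K"
      using assms(2) by (simp add: cg_adj_def)
    then have "cg_walk K q q 0"
      by (rule cg_walk_refl)
    then show ?thesis
      using that[of 0] True by simp
  next
    case False
    with assms(3) have adj: "cg_adj K q y"
      by simp
    then have "y \<in> cg_vertices K"
      by (simp add: cg_adj_def)
    then show ?thesis
      using that[of 1] cg_walk_Cons[OF adj cg_walk_refl] by simp
  qed
  have walk_p: "cg_walk K p y (Suc m)"
    using cg_walk_Cons[OF assms(2) m(2)] .
  from assms(1) show ?thesis
  proof
    assume "x = p"
    then show ?thesis
      using walk_p m(1) by (intro exI[of _ "Suc m"]) auto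
  next
    assume "cg_adj K x p"
    then show ?thesis
      using cg_walk_Cons[OF _ walk_p] m(1) by (intro exI[of _ "Suc (Suc m)"]) auto
  qed
qed

lemma cg_connected_diam_le:
  assumes walks: "\<forall>x \<in> cg_vertices K. \<forall>y \<in> cg_vertices K. \<exists>n\<le>k. cg_walk K x y n"
    and nonempty: "cg_vertices K \<noteq> {}"
  shows "cg_connected K \<and> cg_diam K \<le> k"
proof
  show "cg_connected K"
    unfolding cg_connected_def using walks by blast
  let ?D = "{cg_dist K x y | x y. x \<in> cg_vertices K \<and> y \<in> cg_vertices K}"
  have "cg_dist K x y \<le> k" if "x \<in> cg_vertices K" "y \<in> cg_vertices K" for x y
    using walks that unfolding cg_dist_def by (meson Least_le le_trans)
  then have "?D \<subseteq> {..k}"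
    by auto
  moreover have "?D \<noteq> {}"
    using nonempty by blast
  ultimately show "cg_diam K \<le> k"
    unfolding cg_diam_def by (meson Max_in finite_atMost finite_subset atMost_iff subsetD)
qed

locale coprime_groups = G: group G + H: group H
  for G :: "('a, 'c) monoid_scheme" and H :: "('b, 'd) monoid_scheme" +
  assumes coprime_order: "coprime (order G) (order H)"
begin

lemma group_DirProd: "group (G \<times>\<times> H)"
  using DirProd_group G.group_axioms H.group_axioms by blast

lemma components_in_generate:
  assumes a: "a \<in> carrier G" and b: "b \<in> carrier H"
  shows "(a, \<one>\<^bsub>H\<^esub>) \<in> generate (G \<times>\<times> H) {(a, b)}"
    and "(\<one>\<^bsub>G\<^esub>, b) \<in> generate (G \<times>\<times> H) {(a, b)}"
proof -
  have coprime_ord: "coprime (G.ord a) (H.ord b)"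
    using coprime_order G.ord_dvd_group_order[OF a] H.ord_dvd_group_order[OF b]
    by (meson coprime_divisors)
  have powers: "(a, b) [^]\<^bsub>G \<times>\<times> H\<^esub> (n::nat) \<in> generate (G \<times>\<times> H) {(a, b)}" for n
    using group.nat_pow_in_generate[OF group_DirProd, of "(a, b)"] a b by simp
  obtain u where "a [^]\<^bsub>G\<^esub> (H.ord b * u) = a"
    using G.pow_mult_eq_self_if_coprime_ord[OF a] coprime_ord by (metis coprime_commute)
  then show "(a, \<one>\<^bsub>H\<^esub>) \<in> generate (G \<times>\<times> H) {(a, b)}"
    using powers[of "H.ord b * u"] b by (simp add: H.nat_pow_pow[symmetric])
  obtain v where "b [^]\<^bsub>H\<^esub> (G.ord a * v) = b"
    using H.pow_mult_eq_self_if_coprime_ord[OF b] coprime_ord by metis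
  then show "(\<one>\<^bsub>G\<^esub>, b) \<in> generate (G \<times>\<times> H) {(a, b)}"
    using powers[of "G.ord a * v"] a by (simp add: G.nat_pow_pow[symmetric])
qed

lemma cyclic_group_subgroup_generated_components:
  assumes "a \<in> carrier G" "b \<in> carrier H"
    and "S \<subseteq> {(a, \<one>\<^bsub>H\<^esub>), (\<one>\<^bsub>G\<^esub>, b), (a, b)}" "(a, b) \<in> generate (G \<times>\<times> H) S"
  shows "cyclic_group (subgroup_generated (G \<times>\<times> H) S)"
proof (rule group.cyclic_group_subgroup_generatedI[OF group_DirProd _ _ assms(4)])
  show "S \<subseteq> carrier (G \<times>\<times> H)"
    using assms(1-3) by auto
  show "S \<subseteq> generate (G \<times>\<times> H) {(a, b)}"
    using assms(3) components_in_generate[OF assms(1,2)] generate.incl[of "(a, b)"] by blast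
qed

lemma cg_adj_axes:
  assumes "a \<in> carrier G" "b \<in> carrier H" "a \<noteq> \<one>\<^bsub>G\<^esub>" "b \<noteq> \<one>\<^bsub>H\<^esub>"
  shows "cg_adj (G \<times>\<times> H) (a, \<one>\<^bsub>H\<^esub>) (\<one>\<^bsub>G\<^esub>, b)"
proof -
  have "(a, \<one>\<^bsub>H\<^esub>) \<otimes>\<^bsub>G \<times>\<times> H\<^esub> (\<one>\<^bsub>G\<^esub>, b) \<in> generate (G \<times>\<times> H) {(a, \<one>\<^bsub>H\<^esub>), (\<one>\<^bsub>G\<^esub>, b)}"
    by (intro generate.eng generate.incl) auto
  then have "(a, b) \<in> generate (G \<times>\<times> H) {(a, \<one>\<^bsub>H\<^esub>), (\<one>\<^bsub>G\<^esub>, b)}"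
    using assms by simp
  then show ?thesis
    unfolding cg_adj_def cg_vertices_DirProd
    using assms cyclic_group_subgroup_generated_components[OF assms(1,2)] by auto
qed

lemma cg_adj_left_axis:
  assumes "a \<in> carrier G" "b \<in> carrier H" "a \<noteq> \<one>\<^bsub>G\<^esub>" "b \<noteq> \<one>\<^bsub>H\<^esub>"
  shows "cg_adj (G \<times>\<times> H) (a, b) (a, \<one>\<^bsub>H\<^esub>)"
  unfolding cg_adj_def cg_vertices_DirProd
  using assms cyclic_group_subgroup_generated_components[OF assms(1,2), of "{(a, b), (a, \<one>\<^bsub>H\<^esub>)}"]
  by (auto intro: generate.incl)

lemma cg_adj_right_axis:
  assumes "a \<in> carrier G" "b \<in> carrier H" "a \<noteq> \<one>\<^bsub>G\<^esub>" "b \<noteq> \<one>\<^bsub>H\<^esub>"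
  shows "cg_adj (G \<times>\<times> H) (a, b) (\<one>\<^bsub>G\<^esub>, b)"
  unfolding cg_adj_def cg_vertices_DirProd
  using assms cyclic_group_subgroup_generated_components[OF assms(1,2), of "{(a, b), (\<one>\<^bsub>G\<^esub>, b)}"]
  by (auto intro: generate.incl)

lemma eq_or_cg_adj_left_axis:
  assumes "a \<in> carrier G" "b \<in> carrier H" "a \<noteq> \<one>\<^bsub>G\<^esub>"
  shows "(a, b) = (a, \<one>\<^bsub>H\<^esub>) \<or> cg_adj (G \<times>\<times> H) (a, b) (a, \<one>\<^bsub>H\<^esub>)"
  using assms cg_adj_left_axis by blast

lemma eq_or_cg_adj_right_axis:
  assumes "a \<in> carrier G" "b \<in> carrier H" "b \<noteq> \<one>\<^bsub>H\<^esub>"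
  shows "(a, b) = (\<one>\<^bsub>G\<^esub>, b) \<or> cg_adj (G \<times>\<times> H) (a, b) (\<one>\<^bsub>G\<^esub>, b)"
  using assms cg_adj_right_axis by blast

lemma cg_vertices_joined_through_axes:
  assumes "carrier G \<noteq> {\<one>\<^bsub>G\<^esub>}" "carrier H \<noteq> {\<one>\<^bsub>H\<^esub>}"
    and "(g1, h1) \<in> cg_vertices (G \<times>\<times> H)" "(g2, h2) \<in> cg_vertices (G \<times>\<times> H)"
  obtains p q where "(g1, h1) = p \<or> cg_adj (G \<times>\<times> H) (g1, h1) p" "cg_adj (G \<times>\<times> H) p q"
    "q = (g2, h2) \<or> cg_adj (G \<times>\<times> H) q (g2, h2)"
proof -
  obtain a0 where a0: "a0 \<in> carrier G" "a0 \<noteq> \<one>\<^bsub>G\<^esub>"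
    using assms(1) G.one_closed by blast
  obtain b0 where b0: "b0 \<in> carrier H" "b0 \<noteq> \<one>\<^bsub>H\<^esub>"
    using assms(2) H.one_closed by blast
  have g1: "g1 \<in> carrier G" and h1: "h1 \<in> carrier H" and g2: "g2 \<in> carrier G"
    and h2: "h2 \<in> carrier H"
    and nontrivial: "g1 \<noteq> \<one>\<^bsub>G\<^esub> \<or> h1 \<noteq> \<one>\<^bsub>H\<^esub>" "g2 \<noteq> \<one>\<^bsub>G\<^esub> \<or> h2 \<noteq> \<one>\<^bsub>H\<^esub>"
    using assms(3,4) by (auto simp: cg_vertices_DirProd)
  note adj_flip = cg_adj_commute[THEN iffD1]
  consider "g1 \<noteq> \<one>\<^bsub>G\<^esub>" "h2 \<noteq> \<one>\<^bsub>H\<^esub>" | "h1 \<noteq> \<one>\<^bsub>H\<^esub>" "g2 \<noteq> \<one>\<^bsub>G\<^esub>"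
    | "g1 = \<one>\<^bsub>G\<^esub>" "g2 = \<one>\<^bsub>G\<^esub>" | "h1 = \<one>\<^bsub>H\<^esub>" "h2 = \<one>\<^bsub>H\<^esub>"
    using nontrivial by blast
  then show ?thesis
  proof cases
    case 1
    show ?thesis
      by (rule that[OF eq_or_cg_adj_left_axis[OF g1 h1 1(1)] cg_adj_axes[OF g1 h2 1]
            eq_or_cg_adj_commute[THEN iffD1, OF eq_or_cg_adj_right_axis[OF g2 h2 1(2)]]])
  next
    case 2
    show ?thesis
      by (rule that[OF eq_or_cg_adj_right_axis[OF g1 h1 2(1)] adj_flip[OF cg_adj_axes[OF g2 h1 2(2,1)]]
            eq_or_cg_adj_commute[THEN iffD1, OF eq_or_cg_adj_left_axis[OF g2 h2 2(2)]]])
  next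
    case 3
    with nontrivial show ?thesis
      using that[of "(g1, h1)" "(a0, \<one>\<^bsub>H\<^esub>)"] adj_flip[OF cg_adj_axes[OF a0(1) h1 a0(2)]]
        cg_adj_axes[OF a0(1) h2 a0(2)] by simp
  next
    case 4
    with nontrivial show ?thesis
      using that[of "(g1, h1)" "(\<one>\<^bsub>G\<^esub>, b0)"] cg_adj_axes[OF g1 b0(1) _ b0(2)]
        adj_flip[OF cg_adj_axes[OF g2 b0(1) _ b0(2)]] by simp
  qed
qed

end

theorem lemma4p1:
  fixes G :: "('a, 'c) monoid_scheme" and H :: "('b, 'd) monoid_scheme"
  assumes "group G" and "group H"
    and "finite (carrier G)" and "finite (carrier H)"
    and "carrier G \<noteq> {\<one>\<^bsub>G\<^esub>}" and "carrier H \<noteq> {\<one>\<^bsub>H\<^esub>}"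
    and "coprime (order G) (order H)"
  shows "cg_connected (G \<times>\<times> H) \<and> cg_diam (G \<times>\<times> H) \<le> 3"
proof (rule cg_connected_diam_le)
  interpret coprime_groups G H
    using assms(1,2,7) by (simp add: coprime_groups_def coprime_groups_axioms_def)
  show "\<forall>x \<in> cg_vertices (G \<times>\<times> H). \<forall>y \<in> cg_vertices (G \<times>\<times> H). \<exists>n\<le>3. cg_walk (G \<times>\<times> H) x y n"
  proof (intro ballI)
    fix x y
    assume vertices: "x \<in> cg_vertices (G \<times>\<times> H)" "y \<in> cg_vertices (G \<times>\<times> H)"
    obtain g1 h1 g2 h2 where xy: "x = (g1, h1)" "y = (g2, h2)"
      by fastforce
    obtain p q where "x = p \<or> cg_adj (G \<times>\<times> H) x p" "cg_adj (G \<times>\<times> H) p q"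
      "q = y \<or> cg_adj (G \<times>\<times> H) q y"
      using vertices unfolding xy by (rule cg_vertices_joined_through_axes[OF assms(5,6)])
    then show "\<exists>n\<le>3. cg_walk (G \<times>\<times> H) x y n"
      by (rule cg_walk_through_edge)
  qed
  obtain a where "a \<in> carrier G" "a \<noteq> \<one>\<^bsub>G\<^esub>"
    using assms(5) G.one_closed by blast
  then show "cg_vertices (G \<times>\<times> H) \<noteq> {}"
    unfolding cg_vertices_DirProd by blast
qed

end
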